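(* Let $y\in(0,\bar\delta_A)$ and let $\tau=\int_0^y\frac{du}{G(\kappa_A(u)/A)}$. (i) If $\mu<0$ and there exist constants $p<1$ and $K>0$ with $\lim_{x\to0^+}x^pF'(x)=K$, then $\tau<\infty$. (ii) If $\mu=0$ and there exist constants $p<1$ and $K>0$ with $\lim_{x\to0^+}x^pF'(x)=K$, then $\tau=\infty$ when $p\in[0,1)$ and $\tau<\infty$ when $p<0$.
   Context: $L$ is a one-dimensional, non-trivial Lévy process such that $L_1$ has finite second moment and the set $\{\delta<0:\mathbb E[e^{\delta L_1}]<\infty\}$ is non-empty, with decomposition $L_t=\mu t+\sigma W_t+\int_{\mathbb R}x\,(N(t,dx)-t\nu(dx))$ ($\mu\in\mathbb R$ the drift). Let $\bar\delta=\inf\{\delta<0:\mathbb E[e^{\delta L_1}]<\infty\}$, $A>0$, $\bar\delta_A=-\bar\delta/A$, $\kappa(x)=\ln\mathbb E[e^{xL_1}]$, $\kappa_A(x)=\kappa(-Ax)$ for $x\in[0,\bar\delta_A)$. $F:[0,\infty)\to[0,\infty)$ satisfies (i) $F\in C([0,\infty))\cap C^1((0,\infty))$; (ii) $F(0)=0$; (iii) $x\mapsto xF(x)$ is strictly convex on $[0,\infty)$; (iv) $x\mapsto x^2F'(x)$ is strictly increasing on $(0,\infty)$ and tends to $\infty$ as $x\to\infty$. $G:[0,\infty)\to[0,\infty)$ is the inverse of $x\mapsto x^2F'(x)$, with $G(0)=0$. ($\tau$ is the liquidation time of the optimal strategy.) *)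

theory Defs
  imports "HOL-Probability.Probability"
begin

definition strictly_convex_on :: "real set \<Rightarrow> (real \<Rightarrow> real) \<Rightarrow> bool" where
  "strictly_convex_on S f \<longleftrightarrow> convex S \<and>
     (\<forall>x\<in>S. \<forall>y\<in>S. x \<noteq> y \<longrightarrow> (\<forall>t::real. 0 < t \<and> t < 1 \<longrightarrow>
        f ((1 - t) * x + t * y) < (1 - t) * f x + t * f y))"

definition levy_process :: "'a measure \<Rightarrow> (real \<Rightarrow> 'a \<Rightarrow> real) \<Rightarrow> bool" where
  "levy_process M L \<longleftrightarrow> prob_space M
    \<and> (\<forall>t\<ge>0. L t \<in> borel_measurable M)
    \<and> (AE \<omega> in M. L 0 \<omega> = 0)
    \<and> (\<forall>(ts::nat \<Rightarrow> real) n. 0 \<le> ts 0 \<and> (\<forall>i<n. ts i \<le> ts (Suc i)) \<longrightarrow>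
          prob_space.indep_vars M (\<lambda>_. borel) (\<lambda>i \<omega>. L (ts (Suc i)) \<omega> - L (ts i) \<omega>) {..<n})
    \<and> (\<forall>s t. 0 \<le> s \<and> 0 \<le> t \<longrightarrow>
          distr M borel (\<lambda>\<omega>. L (s + t) \<omega> - L s \<omega>) = distr M borel (L t))
    \<and> (\<forall>t\<ge>0. \<forall>e>0. ((\<lambda>s. measure M {\<omega>\<in>space M. e < \<bar>L s \<omega> - L t \<omega>\<bar>}) \<longlongrightarrow> 0)
          (at t within {0..}))
    \<and> (AE \<omega> in M. \<forall>t\<ge>0. ((\<lambda>s. L s \<omega>) \<longlongrightarrow> L t \<omega>) (at_right t)
          \<and> (0 < t \<longrightarrow> (\<exists>l. ((\<lambda>s. L s \<omega>) \<longlongrightarrow> l) (at_left t))))"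

text \<open>Drift mu of L. With E[L_1^2] < \<infinity> the decomposition
  L_t = mu t + sigma W_t + compensated jump integral gives E[L_t] = mu t, so mu = E[L_1].\<close>
definition levy_drift :: "'a measure \<Rightarrow> (real \<Rightarrow> 'a \<Rightarrow> real) \<Rightarrow> real" where
  "levy_drift M L = integral\<^sup>L M (L 1)"

definition levy_kappa :: "'a measure \<Rightarrow> (real \<Rightarrow> 'a \<Rightarrow> real) \<Rightarrow> real \<Rightarrow> real" where
  "levy_kappa M L x = ln (integral\<^sup>L M (\<lambda>\<omega>. exp (x * L 1 \<omega>)))"

definition levy_kappaA :: "'a measure \<Rightarrow> (real \<Rightarrow> 'a \<Rightarrow> real) \<Rightarrow> real \<Rightarrow> real \<Rightarrow> real" where
  "levy_kappaA M L A x = levy_kappa M L (- A * x)"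

text \<open>delta_bar = inf{delta < 0 : E[exp(delta L_1)] < infinity}, as an extended real
  (it may be -infinity). Since exp is positive, finiteness of the expectation is integrability.\<close>
definition delta_bar :: "'a measure \<Rightarrow> (real \<Rightarrow> 'a \<Rightarrow> real) \<Rightarrow> ereal" where
  "delta_bar M L = Inf (ereal ` {\<delta>::real. \<delta> < 0 \<and> integrable M (\<lambda>\<omega>. exp (\<delta> * L 1 \<omega>))})"

definition delta_bar_A :: "'a measure \<Rightarrow> (real \<Rightarrow> 'a \<Rightarrow> real) \<Rightarrow> real \<Rightarrow> ereal" where
  "delta_bar_A M L A = - delta_bar M L / ereal A"

definition Ginv :: "(real \<Rightarrow> real) \<Rightarrow> real \<Rightarrow> real" where
  "Ginv F z = (if z = 0 then 0 else (THE x. 0 < x \<and> x\<^sup>2 * deriv F x = z))"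

definition liq_time :: "'a measure \<Rightarrow> (real \<Rightarrow> 'a \<Rightarrow> real) \<Rightarrow> (real \<Rightarrow> real) \<Rightarrow> real \<Rightarrow> real \<Rightarrow> ennreal" where
  "liq_time M L F A y =
     (\<integral>\<^sup>+ u \<in> {0<..<y}. ennreal (1 / Ginv F (levy_kappaA M L A u / A)) \<partial>lborel)"

end

theory Submission
  imports Defs
begin

text \<open>For small u the cumulant satisfies kappa_A(u) = - A mu u + O(u^2), and when mu = 0 the
  quadratic term is of exact order u^2, because a nontrivial Levy process cannot have L_1 = 0 almost
  surely. Since x^2 F'(x) behaves like K x^(2-p) near 0, its inverse satisfies G(z) ~ z^(1/(2-p)).
  Hence the integrand 1 / G(kappa_A(u) / A) is of order u^(-1/(2-p)) if mu < 0, which is integrable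
  at 0, and of order u^(-2/(2-p)) if mu = 0, which is integrable at 0 exactly when p < 0.\<close>

section \<open>Power singularities at 0\<close>

lemma has_integral_inverse_real:
  fixes a b :: real
  assumes "0 < a" "a \<le> b"
  shows "((\<lambda>x. 1 / x) has_integral (ln b - ln a)) {a..b}"
proof (rule fundamental_theorem_of_calculus[where f = ln])
  fix x assume "x \<in> {a..b}"
  then have "(ln has_real_derivative 1 / x) (at x)"
    using assms by (auto intro!: derivative_eq_intros)
  then show "(ln has_vector_derivative 1 / x) (at x within {a..b})"
    by (simp add: has_real_derivative_iff_has_vector_derivative has_vector_derivative_at_within)
qed (use assms in simp)

lemma nn_integral_inverse_eq_top:
  fixes b :: real
  assumes "0 < b"
  shows "(\<integral>\<^sup>+ u \<in> {0<..<b}. ennreal (1 / u) \<partial>lborel) = \<top>"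
proof (rule ccontr)
  assume "(\<integral>\<^sup>+ u \<in> {0<..<b}. ennreal (1 / u) \<partial>lborel) \<noteq> \<top>"
  then obtain r where r: "(\<integral>\<^sup>+ u \<in> {0<..<b}. ennreal (1 / u) \<partial>lborel) = ennreal r" "0 \<le> r"
    using less_top ennreal_cases by (metis infinity_ennreal_def)
  define c where "c = b / 2"
  define e where "e = c * exp (- (r + 1))"
  have c: "0 < c" using assms by (simp add: c_def)
  have e: "0 < e" "e \<le> c" using c r(2) by (auto simp: e_def)
  have "ennreal (r + 1) = ennreal (ln c - ln e)"
    using c by (simp add: e_def ln_mult)
  also have "\<dots> = (\<integral>\<^sup>+ u \<in> {e..c}. ennreal (1 / u) \<partial>lborel)"
    by (rule nn_integral_has_integral_lebesgue'[OF _ has_integral_inverse_real[OF e], symmetric])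
       (use e in auto)
  also have "\<dots> \<le> (\<integral>\<^sup>+ u \<in> {0<..<b}. ennreal (1 / u) \<partial>lborel)"
    using e c assms unfolding c_def by (intro nn_integral_mono) (auto split: split_indicator)
  finally have "ennreal (r + 1) \<le> ennreal r" using r(1) by simp
  then show False using r(2) by (simp add: ennreal_le_iff)
qed

lemma powr_mult_power:
  fixes c u r :: real
  assumes "0 < u"
  shows "(c * u ^ e) powr r = c powr r * u powr (real e * r)"
  using assms by (simp add: powr_mult powr_powr flip: powr_realpow)

lemma nn_integral_powr_bound_finite:
  fixes f :: "real \<Rightarrow> real"
  assumes "0 < y" "0 \<le> C" "0 \<le> D" "s < 1"
    and bound: "\<And>u. 0 < u \<Longrightarrow> u < y \<Longrightarrow> f u \<le> C * u powr (- s) + D"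
  shows "(\<integral>\<^sup>+ u \<in> {0<..<y}. ennreal (f u) \<partial>lborel) < \<top>"
proof -
  have "((\<lambda>u. u powr (- s)) has_integral (y powr (- s + 1) / (- s + 1))) {0..y}"
    using assms by (intro has_integral_powr_from_0) auto
  then have I: "((\<lambda>u. C * u powr (- s) + D) has_integral (C * (y powr (- s + 1) / (- s + 1)) + D * y)) {0..y}"
    using has_integral_const_real[of D 0 y] assms
    by (intro has_integral_add has_integral_mult_right) (auto simp: mult.commute)
  have "(\<integral>\<^sup>+ u \<in> {0<..<y}. ennreal (f u) \<partial>lborel)
      \<le> (\<integral>\<^sup>+ u \<in> {0..y}. ennreal (C * u powr (- s) + D) \<partial>lborel)"
    using bound by (intro nn_integral_mono) (auto split: split_indicator intro!: ennreal_leI)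
  also have "\<dots> = ennreal (C * (y powr (- s + 1) / (- s + 1)) + D * y)"
    by (rule nn_integral_has_integral_lebesgue'[OF _ I]) (use assms in auto)
  also have "\<dots> < \<top>"
    by simp
  finally show ?thesis .
qed

lemma nn_integral_powr_bound_eq_top:
  fixes f :: "real \<Rightarrow> real"
  assumes "0 < b" "b \<le> y" "0 < c" "1 \<le> s"
    and bound: "\<And>u. 0 < u \<Longrightarrow> u < b \<Longrightarrow> c * u powr (- s) \<le> f u"
  shows "(\<integral>\<^sup>+ u \<in> {0<..<y}. ennreal (f u) \<partial>lborel) = \<top>"
proof -
  define b' where "b' = min b 1"
  have b': "0 < b'" "b' \<le> b" "b' \<le> 1" using assms by (auto simp: b'_def)
  have "\<top> = ennreal c * (\<integral>\<^sup>+ u \<in> {0<..<b'}. ennreal (1 / u) \<partial>lborel)"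
    using nn_integral_inverse_eq_top[OF b'(1)] assms by (simp add: ennreal_mult_top)
  also have "\<dots> = (\<integral>\<^sup>+ u. ennreal c * (ennreal (1 / u) * indicator {0<..<b'} u) \<partial>lborel)"
    by (rule nn_integral_cmult[symmetric]) measurable
  also have "\<dots> \<le> (\<integral>\<^sup>+ u \<in> {0<..<y}. ennreal (f u) \<partial>lborel)"
  proof (intro nn_integral_mono)
    fix u :: real
    show "ennreal c * (ennreal (1 / u) * indicator {0<..<b'} u) \<le> ennreal (f u) * indicator {0<..<y} u"
    proof (cases "0 < u \<and> u < b'")
      case True
      then have u: "0 < u" "u < b" "u < y" "u \<le> 1" using b' assms by auto
      have "u powr (- 1) \<le> u powr (- s)"
        using u assms by (intro powr_mono') auto
      then have "c * (1 / u) \<le> c * u powr (- s)"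
        using u assms by (simp add: powr_minus divide_inverse)
      also have "\<dots> \<le> f u" using bound u by auto
      finally show ?thesis
        using True u assms by (simp add: ennreal_mult[symmetric] ennreal_leI)
    qed auto
  qed
  finally show ?thesis by (simp add: top_unique)
qed

section \<open>Exponential moments near 0\<close>

lemma exp_le_quadratic: "exp z \<le> 1 + z + z\<^sup>2 / 2 * (1 + exp z)"
  for z :: real
proof -
  have "\<exists>t. t \<le> max 0 z \<and> exp z = 1 + z + exp t / 2 * z\<^sup>2"
  proof (cases z "0::real" rule: linorder_cases)
    case less
    from Maclaurin_minus[OF less, of 2 "\<lambda>n. exp" exp]
    obtain t where "t < 0" "exp z = (\<Sum>m<2. exp 0 / fact m * z ^ m) + exp t / fact 2 * z ^ 2"
      by (auto intro: DERIV_exp)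
    then show ?thesis
      by (intro exI[of _ t]) (auto simp: eval_nat_numeral)
  next
    case equal
    then show ?thesis
      by (intro exI[of _ 0]) auto
  next
    case greater
    from Maclaurin[OF greater, of 2 "\<lambda>n. exp" exp]
    obtain t where "t < z" "exp z = (\<Sum>m<2. exp 0 / fact m * z ^ m) + exp t / fact 2 * z ^ 2"
      by (auto intro: DERIV_exp)
    then show ?thesis
      by (intro exI[of _ t]) (auto simp: eval_nat_numeral)
  qed
  then obtain t where t: "t \<le> max 0 z" and taylor: "exp z = 1 + z + exp t / 2 * z\<^sup>2"
    by blast
  have "exp t \<le> exp (max 0 z)"
    using t by simp
  also have "\<dots> \<le> 1 + exp z"
    by (simp add: max_def)
  finally have "exp t * z\<^sup>2 \<le> (1 + exp z) * z\<^sup>2"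
    by (intro mult_right_mono) auto
  then have "exp t / 2 * z\<^sup>2 \<le> z\<^sup>2 / 2 * (1 + exp z)"
    by (simp add: field_simps)
  then show ?thesis
    using taylor by linarith
qed

lemma square_mult_exp_le: "0 < a \<Longrightarrow> x \<le> 0 \<Longrightarrow> x\<^sup>2 * exp (a * x) \<le> 2 / a\<^sup>2"
  for a x :: real
proof -
  assume a: "0 < a" and x: "x \<le> 0"
  have w: "0 \<le> - (a * x)"
    using a x by (simp add: mult_nonneg_nonpos)
  have "(- (a * x))\<^sup>2 / 2 \<le> exp (- (a * x))"
    using exp_lower_Taylor_quadratic[OF w] w by linarith
  then have "(a * x)\<^sup>2 / 2 \<le> exp (- (a * x))"
    by simp
  then have "(a * x)\<^sup>2 * exp (a * x) \<le> 2"
    by (simp add: exp_minus field_simps)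
  then show ?thesis
    using a by (simp add: field_simps power_mult_distrib)
qed

lemma exp_mult_le_exp_mult_plus_1:
  fixes c d x :: real
  assumes "c \<le> d" "d \<le> 0"
  shows "exp (d * x) \<le> exp (c * x) + 1"
proof (cases "x \<le> 0")
  case True
  then have "exp (d * x) \<le> exp (c * x)"
    using assms by (simp add: mult_right_mono_neg)
  then show ?thesis
    using exp_gt_zero[of "c * x"] by linarith
next
  case False
  then have "exp (d * x) \<le> 1"
    using assms by (simp add: mult_nonpos_nonneg)
  then show ?thesis
    using exp_gt_zero[of "c * x"] by linarith
qed

lemma exp_mult_le_quadratic:
  fixes d d' x :: real
  assumes "d' \<le> d" "d \<le> 0"
  shows "exp (d * x) \<le> 1 + d * x + d\<^sup>2 * (x\<^sup>2 + x\<^sup>2 * exp (d' * x) / 2)"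
proof -
  have "(d * x)\<^sup>2 / 2 * (1 + exp (d * x)) \<le> (d * x)\<^sup>2 / 2 * (2 + exp (d' * x))"
    using exp_mult_le_exp_mult_plus_1[OF assms, of x] by (intro mult_left_mono) auto
  also have "\<dots> = d\<^sup>2 * (x\<^sup>2 + x\<^sup>2 * exp (d' * x) / 2)"
    by (simp add: power_mult_distrib field_simps)
  finally show ?thesis
    using exp_le_quadratic[of "d * x"] by linarith
qed

lemma ln_ge_divide_one_plus:
  fixes w W m :: real
  assumes "0 \<le> w" "w \<le> W" "1 + w \<le> m"
  shows "w / (1 + W) \<le> ln m"
proof -
  have "w / (1 + W) \<le> w / (1 + w)"
    using assms by (intro divide_left_mono) auto
  also have "\<dots> \<le> 1 - 1 / m"
    using assms by (simp add: field_simps)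
  also have "\<dots> \<le> ln m"
    using ln_le_minus_one[of "1 / m"] assms by (simp add: ln_div)
  finally show ?thesis .
qed

locale neg_exp_moment = prob_space +
  fixes X :: "'a \<Rightarrow> real" and \<delta> :: real
  assumes X_measurable [measurable]: "X \<in> borel_measurable M"
    and X_square_integrable: "integrable M (\<lambda>\<omega>. (X \<omega>)\<^sup>2)"
    and delta_neg: "\<delta> < 0"
    and exp_delta_integrable: "integrable M (\<lambda>\<omega>. exp (\<delta> * X \<omega>))"
begin

text \<open>Only the negative part of X appears: for d \<le> 0 the estimate exp z \<ge> 1 + z + z^2/2,
  valid for z \<ge> 0, can be used exactly where X \<le> 0.\<close>

abbreviation lower_second_moment :: real where
  "lower_second_moment \<equiv> expectation (\<lambda>\<omega>. (min (X \<omega>) 0)\<^sup>2)"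

lemma X_integrable: "integrable M X"
  by (rule square_integrable_imp_integrable[OF X_measurable X_square_integrable])

lemma neg_part_square_integrable: "integrable M (\<lambda>\<omega>. (min (X \<omega>) 0)\<^sup>2)"
  by (rule Bochner_Integration.integrable_bound[OF X_square_integrable]) (auto simp: min_def)

lemma exp_integrable:
  assumes "\<delta> \<le> d" "d \<le> 0"
  shows "integrable M (\<lambda>\<omega>. exp (d * X \<omega>))"
proof (rule Bochner_Integration.integrable_bound[where f = "\<lambda>\<omega>. exp (\<delta> * X \<omega>) + 1"])
  show "integrable M (\<lambda>\<omega>. exp (\<delta> * X \<omega>) + 1)"
    using exp_delta_integrable by auto
  show "AE \<omega> in M. norm (exp (d * X \<omega>)) \<le> norm (exp (\<delta> * X \<omega>) + 1)"
    using exp_mult_le_exp_mult_plus_1[OF assms] by (intro AE_I2) simp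
qed measurable

lemma expectation_exp_pos:
  assumes "\<delta> \<le> d" "d \<le> 0"
  shows "0 < expectation (\<lambda>\<omega>. exp (d * X \<omega>))"
proof -
  have "expectation (\<lambda>\<omega>. exp (d * X \<omega>)) \<noteq> 0"
  proof
    assume "expectation (\<lambda>\<omega>. exp (d * X \<omega>)) = 0"
    then have "AE \<omega> in M. exp (d * X \<omega>) = 0"
      using integral_nonneg_eq_0_iff_AE[OF exp_integrable[OF assms]] by simp
    then have "AE \<omega> in M. False"
      by eventually_elim simp
    then show False
      by (simp add: AE_False)
  qed
  moreover have "0 \<le> expectation (\<lambda>\<omega>. exp (d * X \<omega>))"
    by (rule integral_nonneg_AE) simp
  ultimately show ?thesis
    by linarith
qed

lemma expectation_exp_ge:
  assumes "\<delta> \<le> d" "d \<le> 0"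
  shows "1 + d * expectation X + d\<^sup>2 / 2 * lower_second_moment
           \<le> expectation (\<lambda>\<omega>. exp (d * X \<omega>))"
proof -
  have "1 + d * x + d\<^sup>2 / 2 * (min x 0)\<^sup>2 \<le> exp (d * x)" for x
  proof (cases "x \<le> 0")
    case True
    then have "0 \<le> d * x"
      using assms by (simp add: mult_nonpos_nonpos)
    from exp_lower_Taylor_quadratic[OF this] show ?thesis
      using True by (simp add: power_mult_distrib)
  qed simp
  then have "expectation (\<lambda>\<omega>. 1 + d * X \<omega> + d\<^sup>2 / 2 * (min (X \<omega>) 0)\<^sup>2)
      \<le> expectation (\<lambda>\<omega>. exp (d * X \<omega>))"
    using X_integrable neg_part_square_integrable exp_integrable[OF assms]
    by (intro integral_mono) auto
  then show ?thesis
    using X_integrable neg_part_square_integrable by (simp add: prob_space)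
qed

lemma square_mult_exp_integrable:
  assumes "\<delta> < d'" "d' \<le> 0"
  shows "integrable M (\<lambda>\<omega>. (X \<omega>)\<^sup>2 * exp (d' * X \<omega>))"
proof -
  define a where "a = d' - \<delta>"
  have a: "0 < a"
    using assms by (simp add: a_def)
  have "(X \<omega>)\<^sup>2 * exp (d' * X \<omega>) \<le> 2 / a\<^sup>2 * exp (\<delta> * X \<omega>) + (X \<omega>)\<^sup>2" for \<omega>
  proof (cases "X \<omega> \<le> 0")
    case True
    have "(X \<omega>)\<^sup>2 * exp (a * X \<omega>) * exp (\<delta> * X \<omega>) \<le> 2 / a\<^sup>2 * exp (\<delta> * X \<omega>)"
      using square_mult_exp_le[OF a True] by (intro mult_right_mono) auto
    moreover have "exp (d' * X \<omega>) = exp (a * X \<omega>) * exp (\<delta> * X \<omega>)"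
      by (simp add: a_def algebra_simps flip: exp_add)
    ultimately show ?thesis
      by (simp add: mult.assoc add_increasing2)
  next
    case False
    then have "exp (d' * X \<omega>) \<le> 1"
      using assms by (simp add: mult_nonpos_nonneg)
    then have "(X \<omega>)\<^sup>2 * exp (d' * X \<omega>) \<le> (X \<omega>)\<^sup>2"
      by (simp add: mult_left_le)
    moreover have "0 \<le> 2 / a\<^sup>2 * exp (\<delta> * X \<omega>)"
      by simp
    ultimately show ?thesis
      by linarith
  qed
  note bound = this
  show ?thesis
  proof (rule Bochner_Integration.integrable_bound[where f = "\<lambda>\<omega>. 2 / a\<^sup>2 * exp (\<delta> * X \<omega>) + (X \<omega>)\<^sup>2"])
    show "integrable M (\<lambda>\<omega>. 2 / a\<^sup>2 * exp (\<delta> * X \<omega>) + (X \<omega>)\<^sup>2)"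
      using exp_delta_integrable X_square_integrable by simp
    show "AE \<omega> in M. norm ((X \<omega>)\<^sup>2 * exp (d' * X \<omega>)) \<le> norm (2 / a\<^sup>2 * exp (\<delta> * X \<omega>) + (X \<omega>)\<^sup>2)"
      using bound by (intro AE_I2) simp
  qed measurable
qed

lemma expectation_exp_le:
  assumes "\<delta> < d'" "d' \<le> 0"
  obtains B where "\<And>d. d' \<le> d \<Longrightarrow> d \<le> 0 \<Longrightarrow>
    expectation (\<lambda>\<omega>. exp (d * X \<omega>)) \<le> 1 + d * expectation X + d\<^sup>2 * B"
proof (rule that)
  fix d assume d: "d' \<le> d" "d \<le> 0"
  have "expectation (\<lambda>\<omega>. exp (d * X \<omega>))
      \<le> expectation (\<lambda>\<omega>. 1 + d * X \<omega> + d\<^sup>2 * ((X \<omega>)\<^sup>2 + (X \<omega>)\<^sup>2 * exp (d' * X \<omega>) / 2))"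
    using X_integrable square_mult_exp_integrable[OF assms] X_square_integrable exp_integrable[of d]
      exp_mult_le_quadratic[OF d] d assms
    by (intro integral_mono) auto
  also have "\<dots> = 1 + d * expectation X + d\<^sup>2 *
      (expectation (\<lambda>\<omega>. (X \<omega>)\<^sup>2) + expectation (\<lambda>\<omega>. (X \<omega>)\<^sup>2 * exp (d' * X \<omega>)) / 2)"
    using X_integrable square_mult_exp_integrable[OF assms] X_square_integrable by (simp add: prob_space)
  finally show "expectation (\<lambda>\<omega>. exp (d * X \<omega>)) \<le> 1 + d * expectation X + d\<^sup>2 *
      (expectation (\<lambda>\<omega>. (X \<omega>)\<^sup>2) + expectation (\<lambda>\<omega>. (X \<omega>)\<^sup>2 * exp (d' * X \<omega>)) / 2)" .
qed

lemma lower_second_moment_nonneg: "0 \<le> lower_second_moment"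
  by (rule integral_nonneg_AE) simp

lemma lower_second_moment_pos:
  assumes "expectation X = 0" "\<not> (AE \<omega> in M. X \<omega> = 0)"
  shows "0 < lower_second_moment"
proof (rule ccontr)
  assume "\<not> 0 < lower_second_moment"
  then have "lower_second_moment = 0"
    using lower_second_moment_nonneg by linarith
  then have "AE \<omega> in M. (min (X \<omega>) 0)\<^sup>2 = 0"
    using integral_nonneg_eq_0_iff_AE[OF neg_part_square_integrable] by simp
  then have "AE \<omega> in M. 0 \<le> X \<omega>"
    by eventually_elim (auto simp: min_def split: if_splits)
  then have "AE \<omega> in M. X \<omega> = 0"
    using integral_nonneg_eq_0_iff_AE[OF X_integrable] assms(1) by simp
  with assms(2) show False
    by blast
qed

lemma ln_expectation_exp_ge:
  assumes "expectation X \<le> 0" "\<delta> \<le> d" "d \<le> 0"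
  shows "(d * expectation X + d\<^sup>2 / 2 * lower_second_moment)
           / (1 + (\<delta> * expectation X + \<delta>\<^sup>2 / 2 * lower_second_moment))
         \<le> ln (expectation (\<lambda>\<omega>. exp (d * X \<omega>)))"
proof (rule ln_ge_divide_one_plus)
  have "0 \<le> d * expectation X"
    using assms by (simp add: mult_nonpos_nonpos)
  then show "0 \<le> d * expectation X + d\<^sup>2 / 2 * lower_second_moment"
    using lower_second_moment_nonneg by simp
  have "d * expectation X \<le> \<delta> * expectation X"
    using assms by (simp add: mult_right_mono_neg)
  moreover have "d\<^sup>2 \<le> \<delta>\<^sup>2"
    using assms by (simp add: abs_le_square_iff[symmetric])
  ultimately show "d * expectation X + d\<^sup>2 / 2 * lower_second_moment
      \<le> \<delta> * expectation X + \<delta>\<^sup>2 / 2 * lower_second_moment"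
    using lower_second_moment_nonneg by (simp add: add_mono mult_right_mono)
  show "1 + (d * expectation X + d\<^sup>2 / 2 * lower_second_moment) \<le> expectation (\<lambda>\<omega>. exp (d * X \<omega>))"
    using expectation_exp_ge[OF assms(2,3)] by simp
qed

lemma ln_expectation_exp_ge_linear:
  assumes "expectation X < 0"
  obtains a where "0 < a" "\<And>d. \<delta> \<le> d \<Longrightarrow> d \<le> 0 \<Longrightarrow> a * - d \<le> ln (expectation (\<lambda>\<omega>. exp (d * X \<omega>)))"
proof (rule that)
  define W where "W = \<delta> * expectation X + \<delta>\<^sup>2 / 2 * lower_second_moment"
  have "0 < \<delta> * expectation X"
    using assms delta_neg by (simp add: mult_neg_neg)
  then have W: "0 < 1 + W"
    using lower_second_moment_nonneg unfolding W_def by (simp add: add_pos_nonneg)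
  show "0 < - expectation X / (1 + W)"
    using assms W by (intro divide_pos_pos) auto
  fix d assume d: "\<delta> \<le> d" "d \<le> 0"
  have "- expectation X / (1 + W) * - d = d * expectation X / (1 + W)"
    by simp
  also have "\<dots> \<le> (d * expectation X + d\<^sup>2 / 2 * lower_second_moment) / (1 + W)"
    using W lower_second_moment_nonneg by (intro divide_right_mono) auto
  also have "\<dots> \<le> ln (expectation (\<lambda>\<omega>. exp (d * X \<omega>)))"
    unfolding W_def using ln_expectation_exp_ge[OF less_imp_le[OF assms] d] by simp
  finally show "- expectation X / (1 + W) * - d \<le> ln (expectation (\<lambda>\<omega>. exp (d * X \<omega>)))" .
qed

lemma ln_expectation_exp_ge_quadratic:
  assumes "expectation X = 0" "\<not> (AE \<omega> in M. X \<omega> = 0)"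
  obtains a where "0 < a" "\<And>d. \<delta> \<le> d \<Longrightarrow> d \<le> 0 \<Longrightarrow> a * d\<^sup>2 \<le> ln (expectation (\<lambda>\<omega>. exp (d * X \<omega>)))"
proof (rule that)
  define W where "W = \<delta>\<^sup>2 / 2 * lower_second_moment"
  have W: "0 < 1 + W"
    using lower_second_moment_nonneg by (simp add: W_def add_pos_nonneg)
  show "0 < lower_second_moment / 2 / (1 + W)"
    using lower_second_moment_pos[OF assms] W by simp
  fix d assume d: "\<delta> \<le> d" "d \<le> 0"
  have "lower_second_moment / 2 / (1 + W) * d\<^sup>2 = (d\<^sup>2 / 2 * lower_second_moment) / (1 + W)"
    by simp
  also have "\<dots> \<le> ln (expectation (\<lambda>\<omega>. exp (d * X \<omega>)))"
    unfolding W_def using ln_expectation_exp_ge[OF _ d] assms(1) by simp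
  finally show "lower_second_moment / 2 / (1 + W) * d\<^sup>2 \<le> ln (expectation (\<lambda>\<omega>. exp (d * X \<omega>)))" .
qed

lemma ln_expectation_exp_le_quadratic:
  assumes "expectation X = 0"
  obtains C where "0 < C" "\<And>d. \<delta> / 2 \<le> d \<Longrightarrow> d \<le> 0 \<Longrightarrow> ln (expectation (\<lambda>\<omega>. exp (d * X \<omega>))) \<le> C * d\<^sup>2"
proof -
  obtain B where B: "\<And>d. \<delta> / 2 \<le> d \<Longrightarrow> d \<le> 0 \<Longrightarrow> expectation (\<lambda>\<omega>. exp (d * X \<omega>)) \<le> 1 + d\<^sup>2 * B"
    using expectation_exp_le[of "\<delta> / 2"] delta_neg assms by auto
  show ?thesis
  proof (rule that)
    show "0 < max B 1"
      by simp
    fix d assume d: "\<delta> / 2 \<le> d" "d \<le> 0"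
    have "ln (expectation (\<lambda>\<omega>. exp (d * X \<omega>))) \<le> expectation (\<lambda>\<omega>. exp (d * X \<omega>)) - 1"
      using d delta_neg by (intro ln_le_minus_one expectation_exp_pos) auto
    also have "\<dots> \<le> d\<^sup>2 * B"
      using B[OF d] by simp
    also have "\<dots> \<le> max B 1 * d\<^sup>2"
      by (simp add: mult.commute mult_right_mono)
    finally show "ln (expectation (\<lambda>\<omega>. exp (d * X \<omega>))) \<le> max B 1 * d\<^sup>2" .
  qed
qed

end

section \<open>A Levy process with L 1 = 0 vanishes\<close>

lemma levy_process_prob_space: "levy_process M L \<Longrightarrow> prob_space M"
  unfolding levy_process_def by blast

lemma levy_process_measurable: "levy_process M L \<Longrightarrow> 0 \<le> t \<Longrightarrow> L t \<in> borel_measurable M"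
  unfolding levy_process_def by blast

lemma levy_process_start: "levy_process M L \<Longrightarrow> AE \<omega> in M. L 0 \<omega> = 0"
  unfolding levy_process_def by blast

lemma levy_process_indep_increments: "levy_process M L \<Longrightarrow> 0 \<le> ts 0 \<Longrightarrow> (\<forall>i<n. ts i \<le> ts (Suc i)) \<Longrightarrow>
   prob_space.indep_vars M (\<lambda>_. borel) (\<lambda>i \<omega>. L (ts (Suc i)) \<omega> - L (ts i) \<omega>) {..<n}"
  unfolding levy_process_def by blast

lemma levy_process_stationary: "levy_process M L \<Longrightarrow> 0 \<le> s \<Longrightarrow> 0 \<le> t \<Longrightarrow>
   distr M borel (\<lambda>\<omega>. L (s + t) \<omega> - L s \<omega>) = distr M borel (L t)"
  unfolding levy_process_def by blast

lemma levy_process_right_continuous: "levy_process M L \<Longrightarrow>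
   AE \<omega> in M. \<forall>t\<ge>0. ((\<lambda>s. L s \<omega>) \<longlongrightarrow> L t \<omega>) (at_right t)"
  unfolding levy_process_def by (auto elim: AE_mp)

lemma levy_process_increment_AE_eq:
  assumes levy: "levy_process M L" and st: "0 \<le> s" "0 \<le> t" and c: "AE \<omega> in M. L t \<omega> = c"
  shows "AE \<omega> in M. L (s + t) \<omega> - L s \<omega> = c"
proof -
  have [measurable]: "L t \<in> borel_measurable M" "L s \<in> borel_measurable M" "L (s + t) \<in> borel_measurable M"
    using levy_process_measurable[OF levy] st by auto
  have "AE x in distr M borel (L t). x = c"
    using c by (subst AE_distr_iff) auto
  then have "AE x in distr M borel (\<lambda>\<omega>. L (s + t) \<omega> - L s \<omega>). x = c"
    using levy_process_stationary[OF levy st] by metis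
  then show ?thesis by (subst (asm) AE_distr_iff) auto
qed

lemma (in prob_space) indep_var_AE_eq_imp_AE_const:
  fixes f g :: "'a \<Rightarrow> real"
  assumes indep: "indep_var borel f borel g" and eq: "AE \<omega> in M. f \<omega> = g \<omega>"
    and f: "integrable M f" and g: "integrable M g"
  shows "AE \<omega> in M. f \<omega> = expectation f"
proof -
  define m where "m = expectation f"
  have [measurable]: "f \<in> borel_measurable M" "g \<in> borel_measurable M"
    using f g by blast+
  have fg: "AE \<omega> in M. f \<omega> * g \<omega> = (f \<omega>)\<^sup>2"
    using eq by eventually_elim (simp add: power2_eq_square)
  have f2: "integrable M (\<lambda>\<omega>. (f \<omega>)\<^sup>2)"
    using integrable_cong_AE[OF _ _ fg] indep_var_integrable[OF indep f g] by simp
  have "expectation (\<lambda>\<omega>. (f \<omega>)\<^sup>2) = expectation (\<lambda>\<omega>. f \<omega> * g \<omega>)"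
    using fg by (intro integral_cong_AE) (auto elim: AE_mp)
  also have "\<dots> = m * expectation g"
    unfolding m_def by (rule indep_var_lebesgue_integral[OF indep f g])
  also have "expectation g = m"
    unfolding m_def using eq by (intro integral_cong_AE) (auto elim: AE_mp)
  finally have second_moment: "expectation (\<lambda>\<omega>. (f \<omega>)\<^sup>2) = m\<^sup>2"
    by (simp add: power2_eq_square)
  have "expectation (\<lambda>\<omega>. (f \<omega> - m)\<^sup>2) = expectation (\<lambda>\<omega>. (f \<omega>)\<^sup>2 - 2 * m * f \<omega> + m\<^sup>2)"
    by (simp add: power2_diff algebra_simps)
  also have "\<dots> = 0"
    using f f2 second_moment by (simp add: prob_space m_def power2_eq_square)
  finally have "expectation (\<lambda>\<omega>. (f \<omega> - m)\<^sup>2) = 0" .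
  moreover have "integrable M (\<lambda>\<omega>. (f \<omega> - m)\<^sup>2)"
    using f f2 by (simp add: power2_diff)
  ultimately have "AE \<omega> in M. (f \<omega> - m)\<^sup>2 = 0"
    by (subst (asm) integral_nonneg_eq_0_iff_AE) auto
  then show ?thesis
    unfolding m_def[symmetric] by eventually_elim simp
qed

text \<open>Composing with arctan makes both variables bounded, so the previous lemma applies without
  moment assumptions.\<close>

lemma (in prob_space) indep_var_sum_AE_zero_imp_AE_const:
  fixes X Y :: "'a \<Rightarrow> real"
  assumes [measurable]: "X \<in> borel_measurable M" "Y \<in> borel_measurable M"
    and indep: "indep_var borel X borel Y" and sum: "AE \<omega> in M. X \<omega> + Y \<omega> = 0"
  obtains c where "AE \<omega> in M. X \<omega> = c"
proof -
  have bounded_integrable: "integrable M (\<lambda>\<omega>. arctan (Z \<omega>))" if [measurable]: "Z \<in> borel_measurable M" for Z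
  proof (rule integrable_const_bound[where B = "pi / 2"])
    have "\<bar>arctan v\<bar> \<le> pi / 2" for v
      using arctan_bounded[of v] by auto
    then show "AE \<omega> in M. norm (arctan (Z \<omega>)) \<le> pi / 2"
      by simp
  qed simp
  have "indep_var borel (arctan \<circ> X) borel ((\<lambda>v. arctan (- v)) \<circ> Y)"
    using indep by (rule indep_var_compose) auto
  moreover have "AE \<omega> in M. arctan (X \<omega>) = arctan (- Y \<omega>)"
    using sum by eventually_elim (simp add: eq_neg_iff_add_eq_0[symmetric])
  ultimately have "AE \<omega> in M. arctan (X \<omega>) = expectation (\<lambda>\<omega>. arctan (X \<omega>))"
    using bounded_integrable[of X] bounded_integrable[of "\<lambda>\<omega>. - Y \<omega>"]
    by (intro indep_var_AE_eq_imp_AE_const[where g = "\<lambda>\<omega>. arctan (- Y \<omega>)"]) (auto simp: comp_def)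
  then have "AE \<omega> in M. X \<omega> = tan (expectation (\<lambda>\<omega>. arctan (X \<omega>)))"
    by eventually_elim (metis tan_arctan)
  then show ?thesis
    by (rule that)
qed

text \<open>The increments over the two halves of [0, t] are independent and sum to 0, so both are
  a.s. constant; by stationarity it is the same constant, hence 0.\<close>

lemma levy_process_AE_zero_half:
  assumes levy: "levy_process M L" and t: "0 \<le> t" and z: "AE \<omega> in M. L t \<omega> = 0"
  shows "AE \<omega> in M. L (t/2) \<omega> = 0"
proof -
  interpret prob_space M using levy_process_prob_space[OF levy] .
  define ts where "ts = (\<lambda>i::nat. real i * t / 2)"
  have [measurable]: "L t \<in> borel_measurable M" "L (t/2) \<in> borel_measurable M" "L 0 \<in> borel_measurable M"
    using levy_process_measurable[OF levy] t by auto
  have ind: "indep_vars (\<lambda>_. borel) (\<lambda>i \<omega>. L (ts (Suc i)) \<omega> - L (ts i) \<omega>) {..<2}"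
  proof -
    have "\<forall>i<2. ts i \<le> ts (Suc i)" unfolding ts_def using t by (auto intro!: divide_right_mono mult_right_mono)
    then show ?thesis using levy_process_indep_increments[OF levy, of ts 2] by (simp add: ts_def)
  qed
  have "{..<2::nat} = insert 0 {1}" by auto
  with ind have "indep_var borel (\<lambda>\<omega>. L (ts (Suc 0)) \<omega> - L (ts 0) \<omega>) borel
      (\<lambda>\<omega>. \<Sum>i\<in>{1}. L (ts (Suc i)) \<omega> - L (ts i) \<omega>)"
    using indep_vars_sum[of "{1}" 0 "\<lambda>i \<omega>. L (ts (Suc i)) \<omega> - L (ts i) \<omega>"] by simp
  then have ind2: "indep_var borel (\<lambda>\<omega>. L (t/2) \<omega> - L 0 \<omega>) borel (\<lambda>\<omega>. L t \<omega> - L (t/2) \<omega>)"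
    by (simp add: ts_def)
  have s: "AE \<omega> in M. (L (t/2) \<omega> - L 0 \<omega>) + (L t \<omega> - L (t/2) \<omega>) = 0"
    using z levy_process_start[OF levy] by eventually_elim auto
  have "(\<lambda>\<omega>. L (t/2) \<omega> - L 0 \<omega>) \<in> borel_measurable M" "(\<lambda>\<omega>. L t \<omega> - L (t/2) \<omega>) \<in> borel_measurable M"
    by measurable
  then obtain k where k: "AE \<omega> in M. L (t/2) \<omega> - L 0 \<omega> = k"
    using indep_var_sum_AE_zero_imp_AE_const[OF _ _ ind2 s] by blast
  have k2: "AE \<omega> in M. L (t/2) \<omega> = k"
    using k levy_process_start[OF levy] by eventually_elim auto
  have k3: "AE \<omega> in M. L t \<omega> - L (t/2) \<omega> = k"
    using levy_process_increment_AE_eq[OF levy _ _ k2, of "t/2"] t by simp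
  have "AE \<omega> in M. k + k = 0"
    using k k3 s by eventually_elim auto
  then have "k = 0" by simp
  then show ?thesis using k2 by simp
qed

lemma levy_process_AE_zero_dyadic:
  assumes levy: "levy_process M L" and z: "AE \<omega> in M. L 1 \<omega> = 0"
  shows "AE \<omega> in M. L (1 / 2 ^ k) \<omega> = 0"
proof (induction k)
  case 0
  then show ?case using z by simp
next
  case (Suc k)
  from levy_process_AE_zero_half[OF levy _ Suc] show ?case by (simp add: field_simps)
qed

lemma levy_process_AE_zero_multiple:
  assumes levy: "levy_process M L" and h: "0 \<le> h" and z: "AE \<omega> in M. L h \<omega> = 0"
  shows "AE \<omega> in M. L (real m * h) \<omega> = 0"
proof (induction m)
  case 0
  then show ?case using levy_process_start[OF levy] by simp
next
  case (Suc m)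
  have "AE \<omega> in M. L (real m * h + h) \<omega> - L (real m * h) \<omega> = 0"
    using levy_process_increment_AE_eq[OF levy _ h z] h by auto
  with Suc show ?case by eventually_elim (auto simp: algebra_simps)
qed

lemma filterlim_dyadic_at_right:
  fixes t :: real
  assumes "0 \<le> t"
  shows "filterlim (\<lambda>k::nat. real (nat \<lfloor>t * 2 ^ k\<rfloor> + 1) / 2 ^ k) (at_right t) sequentially"
proof -
  define s where "s = (\<lambda>k::nat. real (nat \<lfloor>t * 2 ^ k\<rfloor> + 1) / 2 ^ k)"
  have s_bounds: "t < s k \<and> s k \<le> t + 1 / 2 ^ k" for k
  proof -
    have "real (nat \<lfloor>t * 2 ^ k\<rfloor>) = of_int \<lfloor>t * 2 ^ k\<rfloor>"
      using assms by simp
    then have "real (nat \<lfloor>t * 2 ^ k\<rfloor>) \<le> t * 2 ^ k" "t * 2 ^ k < real (nat \<lfloor>t * 2 ^ k\<rfloor>) + 1"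
      by linarith+
    then show ?thesis
      unfolding s_def by (auto simp: field_simps)
  qed
  have "(\<lambda>k. t + 1 / 2 ^ k) \<longlonglongrightarrow> t + 0"
    by (intro tendsto_add tendsto_const LIMSEQ_divide_realpow_zero) auto
  then have "s \<longlonglongrightarrow> t"
    using s_bounds
    by (intro real_tendsto_sandwich[of "\<lambda>_. t" s sequentially "\<lambda>k. t + 1 / 2 ^ k" t])
       (auto intro: less_imp_le intro!: always_eventually)
  then show ?thesis
    using s_bounds unfolding s_def[symmetric] by (auto simp: filterlim_at intro!: always_eventually)
qed

text \<open>L vanishes a.s. simultaneously at all dyadic times m / 2^k, and right-continuity of the
  paths carries this over to every t \<ge> 0.\<close>

lemma levy_process_AE_zero_if_AE_zero_1:
  assumes levy: "levy_process M L" and zero: "AE \<omega> in M. L 1 \<omega> = 0" and t: "0 \<le> t"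
  shows "AE \<omega> in M. L t \<omega> = 0"
proof -
  have "AE \<omega> in M. \<forall>mk :: nat \<times> nat. L (real (fst mk) * (1 / 2 ^ snd mk)) \<omega> = 0"
    unfolding AE_all_countable
    using levy_process_AE_zero_multiple[OF levy _ levy_process_AE_zero_dyadic[OF levy zero]] by auto
  then show ?thesis
    using levy_process_right_continuous[OF levy]
  proof eventually_elim
    case (elim \<omega>)
    have "((\<lambda>s. L s \<omega>) \<longlongrightarrow> L t \<omega>) (at_right t)"
      using elim(2) t by auto
    then have "(\<lambda>k::nat. L (real (nat \<lfloor>t * 2 ^ k\<rfloor> + 1) / 2 ^ k) \<omega>) \<longlonglongrightarrow> L t \<omega>"
      using filterlim_dyadic_at_right[OF t] by (rule filterlim_compose)
    moreover have "L (real (nat \<lfloor>t * 2 ^ k\<rfloor> + 1) / 2 ^ k) \<omega> = 0" for k :: nat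
      using elim(1)[rule_format, of "(nat \<lfloor>t * 2 ^ k\<rfloor> + 1, k)"] by simp
    ultimately show "L t \<omega> = 0"
      using LIMSEQ_unique[of _ "L t \<omega>" 0] by simp
  qed
qed

section \<open>The inverse G of x^2 F'(x) near 0\<close>

locale impact_power_law =
  fixes F :: "real \<Rightarrow> real" and p K :: real
  assumes deriv_continuous: "continuous_on {0<..} (deriv F)"
    and x2_deriv_strict_mono: "strict_mono_on {0<..} (\<lambda>x. x\<^sup>2 * deriv F x)"
    and x2_deriv_at_top: "filterlim (\<lambda>x. x\<^sup>2 * deriv F x) at_top at_top"
    and p_less_1: "p < 1"
    and K_pos: "0 < K"
    and powr_deriv_tendsto: "((\<lambda>x. x powr p * deriv F x) \<longlongrightarrow> K) (at_right 0)"
begin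

lemma x2_deriv_eq_powr: "0 < x \<Longrightarrow> x\<^sup>2 * deriv F x = x powr (2 - p) * (x powr p * deriv F x)"
  by (simp add: powr_numeral flip: powr_add)

lemma x2_deriv_less: "0 < x1 \<Longrightarrow> x1 < x2 \<Longrightarrow> x1\<^sup>2 * deriv F x1 < x2\<^sup>2 * deriv F x2"
  by (rule strict_mono_onD[OF x2_deriv_strict_mono]) auto

lemma eventually_x2_deriv_powr_bounds:
  "eventually (\<lambda>x. K / 2 * x powr (2 - p) \<le> x\<^sup>2 * deriv F x \<and> x\<^sup>2 * deriv F x \<le> 2 * K * x powr (2 - p))
     (at_right 0)"
proof -
  have "eventually (\<lambda>x. 0 < x \<and> K / 2 < x powr p * deriv F x \<and> x powr p * deriv F x < 2 * K) (at_right 0)"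
    using powr_deriv_tendsto K_pos
    by (intro eventually_conj eventually_at_right_less order_tendstoD) auto
  then show ?thesis
  proof eventually_elim
    case (elim x)
    then have "x powr (2 - p) * (K / 2) \<le> x powr (2 - p) * (x powr p * deriv F x)"
      "x powr (2 - p) * (x powr p * deriv F x) \<le> x powr (2 - p) * (2 * K)"
      by (auto intro!: mult_left_mono)
    then show ?case
      unfolding x2_deriv_eq_powr[OF conjunct1[OF elim]] by (auto simp: mult_ac)
  qed
qed

lemma x2_deriv_tendsto_0: "((\<lambda>x. x\<^sup>2 * deriv F x) \<longlongrightarrow> 0) (at_right 0)"
proof -
  have "((\<lambda>x. x powr (2 - p) * (x powr p * deriv F x)) \<longlongrightarrow> 0 * K) (at_right 0)"
    using p_less_1
    by (intro tendsto_mult powr_deriv_tendsto tendsto_zero_powrI)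
       (auto intro: tendsto_ident_at simp: eventually_at_right_field intro!: exI[of _ 1])
  moreover have "eventually (\<lambda>x. x powr (2 - p) * (x powr p * deriv F x) = x\<^sup>2 * deriv F x) (at_right 0)"
    unfolding eventually_at_right_field by (intro exI[of _ 1]) (simp add: x2_deriv_eq_powr)
  ultimately show ?thesis
    using Lim_transform_eventually by fastforce
qed

lemma x2_deriv_surj:
  assumes "0 < z"
  shows "\<exists>x>0. x\<^sup>2 * deriv F x = z"
proof -
  have "eventually (\<lambda>x. x\<^sup>2 * deriv F x < z) (at_right 0)"
    using x2_deriv_tendsto_0 assms by (intro order_tendstoD) auto
  then obtain a where a: "0 < a" "a\<^sup>2 * deriv F a < z"
    unfolding eventually_at_right_field by (metis field_lbound_gt_zero less_numeral_extra(1))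
  have "eventually (\<lambda>x. z < x\<^sup>2 * deriv F x) at_top"
    using x2_deriv_at_top unfolding filterlim_at_top_dense by auto
  then obtain c where c: "a \<le> c" "z < c\<^sup>2 * deriv F c"
    unfolding eventually_at_top_linorder by (metis linorder_le_cases order.trans)
  have "continuous_on {a..c} (\<lambda>x. x\<^sup>2 * deriv F x)"
    using a(1) by (intro continuous_intros continuous_on_subset[OF deriv_continuous]) auto
  then obtain x where "a \<le> x" "x \<le> c" "x\<^sup>2 * deriv F x = z"
    using IVT'[of "\<lambda>x. x\<^sup>2 * deriv F x" a z c] a c by auto
  then show ?thesis
    using a(1) by (intro exI[of _ x]) auto
qed

lemma Ginv:
  assumes "0 < z"
  shows "0 < Ginv F z" and "(Ginv F z)\<^sup>2 * deriv F (Ginv F z) = z"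
proof -
  obtain x where x: "0 < x" "x\<^sup>2 * deriv F x = z"
    using x2_deriv_surj[OF assms] by blast
  have "(THE x. 0 < x \<and> x\<^sup>2 * deriv F x = z) = x"
  proof (rule the_equality)
    show "0 < x \<and> x\<^sup>2 * deriv F x = z" using x by simp
  next
    fix w assume "0 < w \<and> w\<^sup>2 * deriv F w = z"
    then show "w = x"
      using x x2_deriv_less[of w x] x2_deriv_less[of x w] by (cases w x rule: linorder_cases) auto
  qed
  then show "0 < Ginv F z" "(Ginv F z)\<^sup>2 * deriv F (Ginv F z) = z"
    using x assms by (simp_all add: Ginv_def)
qed

lemma Ginv_mono:
  assumes "0 < z1" "z1 \<le> z2"
  shows "Ginv F z1 \<le> Ginv F z2"
proof (rule ccontr)
  assume "\<not> ?thesis"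
  then have "(Ginv F z2)\<^sup>2 * deriv F (Ginv F z2) < (Ginv F z1)\<^sup>2 * deriv F (Ginv F z1)"
    using assms Ginv(1)[of z2] by (intro x2_deriv_less) auto
  then show False
    using assms Ginv(2)[of z1] Ginv(2)[of z2] by auto
qed

lemma eventually_Ginv_powr_bounds:
  "eventually (\<lambda>z. (z / (2 * K)) powr (1 / (2 - p)) \<le> Ginv F z \<and> Ginv F z \<le> (2 * z / K) powr (1 / (2 - p)))
     (at_right 0)"
proof -
  obtain x0 where x0: "0 < x0" "\<And>x. 0 < x \<Longrightarrow> x < x0 \<Longrightarrow>
      K / 2 * x powr (2 - p) \<le> x\<^sup>2 * deriv F x \<and> x\<^sup>2 * deriv F x \<le> 2 * K * x powr (2 - p)"
    using eventually_x2_deriv_powr_bounds unfolding eventually_at_right_field by auto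
  define z0 where "z0 = (x0 / 2)\<^sup>2 * deriv F (x0 / 2)"
  have "0 < K / 2 * (x0 / 2) powr (2 - p)"
    using K_pos x0(1) by simp
  also have "\<dots> \<le> z0"
    unfolding z0_def using x0 by auto
  finally have "0 < z0" .
  moreover have "(z / (2 * K)) powr (1 / (2 - p)) \<le> Ginv F z \<and> Ginv F z \<le> (2 * z / K) powr (1 / (2 - p))"
    if z: "0 < z" "z < z0" for z
  proof -
    define x where "x = Ginv F z"
    have x: "0 < x" "x\<^sup>2 * deriv F x = z"
      using Ginv[OF z(1)] by (simp_all add: x_def)
    have "x < x0 / 2"
    proof (rule ccontr)
      assume "\<not> x < x0 / 2"
      then have "z0 \<le> x\<^sup>2 * deriv F x"
        using x2_deriv_less[of "x0 / 2" x] x0(1) unfolding z0_def by (cases "x = x0 / 2") auto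
      then show False
        using x z by simp
    qed
    then have "K / 2 * x powr (2 - p) \<le> z" "z \<le> 2 * K * x powr (2 - p)"
      using x0(2)[of x] x by auto
    then have "z / (2 * K) \<le> x powr (2 - p)" "x powr (2 - p) \<le> 2 * z / K"
      using K_pos by (simp_all add: field_simps)
    then have "(z / (2 * K)) powr (1 / (2 - p)) \<le> (x powr (2 - p)) powr (1 / (2 - p))"
      "(x powr (2 - p)) powr (1 / (2 - p)) \<le> (2 * z / K) powr (1 / (2 - p))"
      using p_less_1 z K_pos by (auto intro!: powr_mono2)
    moreover have "(x powr (2 - p)) powr (1 / (2 - p)) = x"
      using x p_less_1 by (simp add: powr_powr)
    ultimately show ?thesis
      by (simp add: x_def)
  qed
  ultimately show ?thesis
    unfolding eventually_at_right_field by blast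
qed

lemma nn_integral_inverse_Ginv_finite:
  fixes z :: "real \<Rightarrow> real" and e :: nat
  assumes "0 < y" "0 < a" "real e < 2 - p"
    and lower: "\<And>u. 0 < u \<Longrightarrow> u < y \<Longrightarrow> a * u ^ e \<le> z u"
  shows "(\<integral>\<^sup>+ u \<in> {0<..<y}. ennreal (1 / Ginv F (z u)) \<partial>lborel) < \<top>"
proof -
  define r where "r = 1 / (2 - p)"
  have r: "0 < r" "real e * r < 1"
    using p_less_1 assms(3) by (simp_all add: r_def pos_divide_less_eq)
  have "eventually (\<lambda>z. (z / (2 * K)) powr r \<le> Ginv F z) (at_right 0)"
    using eventually_Ginv_powr_bounds by eventually_elim (simp add: r_def)
  then obtain z0 where z0: "0 < z0" "\<And>z. 0 < z \<Longrightarrow> z < z0 \<Longrightarrow> (z / (2 * K)) powr r \<le> Ginv F z"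
    unfolding eventually_at_right_field by auto
  show ?thesis
  proof (rule nn_integral_powr_bound_finite[where C = "(a / (2 * K)) powr (- r)" and D = "1 / Ginv F z0"])
    fix u assume u: "0 < u" "u < y"
    have au: "0 < a * u ^ e"
      using u assms by simp
    have G_le: "Ginv F (a * u ^ e) \<le> Ginv F (z u)"
      using Ginv_mono[OF au lower[OF u]] .
    have G_pos: "0 < Ginv F (a * u ^ e)"
      using Ginv(1)[OF au] .
    have D_nonneg: "0 \<le> 1 / Ginv F z0"
      using Ginv(1)[OF z0(1)] by simp
    have C_nonneg: "0 \<le> (a / (2 * K)) powr (- r) * u powr (- (real e * r))"
      by simp
    show "1 / Ginv F (z u) \<le> (a / (2 * K)) powr (- r) * u powr (- (real e * r)) + 1 / Ginv F z0"
    proof (cases "a * u ^ e < z0")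
      case True
      have low: "(a * u ^ e / (2 * K)) powr r \<le> Ginv F (a * u ^ e)"
        using z0(2)[OF au True] .
      have low_pos: "0 < (a * u ^ e / (2 * K)) powr r"
        using assms(2) u(1) K_pos by simp
      have split: "(a * u ^ e / (2 * K)) powr r = (a / (2 * K)) powr r * u powr (real e * r)"
        using powr_mult_power[OF u(1), of "a / (2 * K)" e r] by simp
      have "1 / Ginv F (z u) \<le> 1 / (a * u ^ e / (2 * K)) powr r"
        using low G_le low_pos G_pos by (intro divide_left_mono mult_pos_pos) auto
      also have "\<dots> = (a / (2 * K)) powr (- r) * u powr (- (real e * r))"
        unfolding split by (simp only: powr_minus inverse_mult_distrib divide_inverse mult_1_left)
      finally show ?thesis
        using D_nonneg by linarith
    next
      case False
      then have "Ginv F z0 \<le> Ginv F (z u)"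
        using Ginv_mono[OF z0(1), of "a * u ^ e"] G_le by linarith
      then have "1 / Ginv F (z u) \<le> 1 / Ginv F z0"
        using Ginv(1)[OF z0(1)] by (intro divide_left_mono mult_pos_pos) auto
      then show ?thesis
        using C_nonneg by linarith
    qed
  qed (use assms r K_pos Ginv(1)[OF z0(1)] in auto)
qed

lemma nn_integral_inverse_Ginv_eq_top:
  fixes z :: "real \<Rightarrow> real"
  assumes "0 \<le> p" "0 < b" "b \<le> y" "0 < C"
    and bounds: "\<And>u. 0 < u \<Longrightarrow> u < b \<Longrightarrow> 0 < z u \<and> z u \<le> C * u\<^sup>2"
  shows "(\<integral>\<^sup>+ u \<in> {0<..<y}. ennreal (1 / Ginv F (z u)) \<partial>lborel) = \<top>"
proof -
  define r where "r = 1 / (2 - p)"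
  have r: "0 < r" "1 \<le> 2 * r"
    using p_less_1 assms(1) by (simp_all add: r_def field_simps)
  have "eventually (\<lambda>z. Ginv F z \<le> (2 * z / K) powr r) (at_right 0)"
    using eventually_Ginv_powr_bounds by eventually_elim (simp add: r_def)
  then obtain z0 where z0: "0 < z0" "\<And>z. 0 < z \<Longrightarrow> z < z0 \<Longrightarrow> Ginv F z \<le> (2 * z / K) powr r"
    unfolding eventually_at_right_field by auto
  define b' where "b' = min b (min 1 (z0 / (2 * C)))"
  have b': "0 < b'" "b' \<le> y"
    using assms z0(1) by (auto simp: b'_def)
  show ?thesis
  proof (rule nn_integral_powr_bound_eq_top[OF b'(1,2), where c = "(2 * C / K) powr (- r)" and s = "2 * r"])
    fix u assume u: "0 < u" "u < b'"
    have zu: "0 < z u" "z u \<le> C * u\<^sup>2"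
      using bounds[of u] u by (auto simp: b'_def)
    have Cu_pos: "0 < C * u\<^sup>2"
      using u assms by simp
    have "u\<^sup>2 \<le> u"
      using u by (simp add: b'_def power2_eq_square mult_le_cancel_right1)
    then have "C * u\<^sup>2 \<le> C * u"
      using assms by simp
    also have "\<dots> < C * (z0 / (2 * C))"
      using u assms by (intro mult_strict_left_mono) (auto simp: b'_def)
    also have "\<dots> < z0"
      using assms z0(1) by simp
    finally have "C * u\<^sup>2 < z0" .
    then have "Ginv F (z u) \<le> (2 * (C * u\<^sup>2) / K) powr r"
      using Ginv_mono[OF zu] z0(2)[OF Cu_pos] by linarith
    also have "2 * (C * u\<^sup>2) / K = 2 * C / K * u ^ 2"
      by simp
    also have "(2 * C / K * u ^ 2) powr r = (2 * C / K) powr r * u powr (2 * r)"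
      using powr_mult_power[OF u(1), of "2 * C / K" 2 r] by simp
    finally have G_le: "Ginv F (z u) \<le> (2 * C / K) powr r * u powr (2 * r)" .
    have "1 / ((2 * C / K) powr r * u powr (2 * r)) \<le> 1 / Ginv F (z u)"
      using G_le Ginv(1)[OF zu(1)] by (intro divide_left_mono mult_pos_pos) auto
    then show "(2 * C / K) powr (- r) * u powr (- (2 * r)) \<le> 1 / Ginv F (z u)"
      by (simp add: powr_minus divide_inverse mult.commute)
  qed (use assms r K_pos in auto)
qed

end

section \<open>The cumulant and the liquidation time\<close>

lemma exp_moment_below_delta_bar_A:
  assumes "0 < A" "ereal y < delta_bar_A M L A"
  obtains \<delta> where "\<delta> < 0" "\<delta> < - A * y" "integrable M (\<lambda>\<omega>. exp (\<delta> * L 1 \<omega>))"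
proof -
  have "delta_bar M L < ereal (- A * y)"
  proof (cases "delta_bar M L")
    case (real r)
    then have "y < - r / A"
      using assms by (simp add: delta_bar_A_def)
    then show ?thesis
      using real assms by (simp add: field_simps)
  qed (use assms in \<open>simp_all add: delta_bar_A_def\<close>)
  then show ?thesis
    using that unfolding delta_bar_def by (auto simp: Inf_less_iff)
qed

lemma levy_kappaA_eq: "levy_kappaA M L A u = ln (integral\<^sup>L M (\<lambda>\<omega>. exp ((- A * u) * L 1 \<omega>)))"
  by (simp add: levy_kappaA_def levy_kappa_def)

context
  fixes M :: "'a measure" and L :: "real \<Rightarrow> 'a \<Rightarrow> real" and \<delta> A y :: real
  assumes moment: "neg_exp_moment M (L 1) \<delta>"
    and delta_le: "\<delta> \<le> - A * y" and A_pos: "0 < A"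
begin

interpretation neg_exp_moment M "L 1" \<delta>
  by (fact moment)

private lemma delta_le_minus_A_mult: "0 \<le> u \<Longrightarrow> u \<le> y \<Longrightarrow> \<delta> \<le> - A * u"
  using delta_le A_pos mult_left_mono[of u y A] by linarith

lemma levy_kappaA_ge_linear:
  assumes "levy_drift M L < 0"
  obtains a where "0 < a" "\<And>u. 0 < u \<Longrightarrow> u < y \<Longrightarrow> a * u \<le> levy_kappaA M L A u / A"
proof -
  obtain a where a: "0 < a" "\<And>d. \<delta> \<le> d \<Longrightarrow> d \<le> 0 \<Longrightarrow> a * - d \<le> ln (expectation (\<lambda>\<omega>. exp (d * L 1 \<omega>)))"
    using ln_expectation_exp_ge_linear assms unfolding levy_drift_def by blast
  have "a * u \<le> levy_kappaA M L A u / A" if "0 < u" "u < y" for u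
    using a(2)[of "- A * u"] delta_le_minus_A_mult[of u] that A_pos
    by (simp add: levy_kappaA_eq field_simps)
  with a(1) show ?thesis
    by (rule that)
qed

lemma levy_kappaA_ge_quadratic:
  assumes "levy_drift M L = 0" "\<not> (AE \<omega> in M. L 1 \<omega> = 0)"
  obtains a where "0 < a" "\<And>u. 0 < u \<Longrightarrow> u < y \<Longrightarrow> a * u\<^sup>2 \<le> levy_kappaA M L A u / A"
proof -
  obtain a where a: "0 < a" "\<And>d. \<delta> \<le> d \<Longrightarrow> d \<le> 0 \<Longrightarrow> a * d\<^sup>2 \<le> ln (expectation (\<lambda>\<omega>. exp (d * L 1 \<omega>)))"
    using ln_expectation_exp_ge_quadratic assms unfolding levy_drift_def by blast
  have "a * A * u\<^sup>2 \<le> levy_kappaA M L A u / A" if "0 < u" "u < y" for u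
    using a(2)[of "- A * u"] delta_le_minus_A_mult[of u] that A_pos
    by (simp add: levy_kappaA_eq field_simps power2_eq_square)
  moreover have "0 < a * A"
    using a(1) A_pos by simp
  ultimately show ?thesis
    using that by blast
qed

lemma levy_kappaA_le_quadratic:
  assumes "levy_drift M L = 0"
  obtains b C where "0 < b" "0 < C" "\<And>u. 0 < u \<Longrightarrow> u < b \<Longrightarrow> levy_kappaA M L A u / A \<le> C * u\<^sup>2"
proof -
  obtain C where C: "0 < C" "\<And>d. \<delta> / 2 \<le> d \<Longrightarrow> d \<le> 0 \<Longrightarrow> ln (expectation (\<lambda>\<omega>. exp (d * L 1 \<omega>))) \<le> C * d\<^sup>2"
    using ln_expectation_exp_le_quadratic assms unfolding levy_drift_def by blast
  have "levy_kappaA M L A u / A \<le> C * A * u\<^sup>2" if "0 < u" "u < - \<delta> / (2 * A)" for u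
    using C(2)[of "- A * u"] that A_pos
    by (simp add: levy_kappaA_eq field_simps power2_eq_square)
  moreover have "0 < - \<delta> / (2 * A)"
    using delta_neg A_pos by (intro divide_pos_pos) auto
  moreover have "0 < C * A"
    using A_pos C(1) by simp
  ultimately show ?thesis
    using that by blast
qed

end

context impact_power_law
begin

lemma liq_time_finite_if_drift_neg:
  assumes "neg_exp_moment M (L 1) \<delta>" "\<delta> \<le> - A * y" "0 < A" "0 < y" "levy_drift M L < 0"
  shows "liq_time M L F A y < \<top>"
proof -
  obtain a where "0 < a" "\<And>u. 0 < u \<Longrightarrow> u < y \<Longrightarrow> a * u ^ 1 \<le> levy_kappaA M L A u / A"
    using levy_kappaA_ge_linear[OF assms(1-3,5)] by auto
  then show ?thesis
    unfolding liq_time_def using assms(4) p_less_1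
    by (intro nn_integral_inverse_Ginv_finite[where e = 1]) auto
qed

lemma liq_time_finite_if_drift_zero:
  assumes "neg_exp_moment M (L 1) \<delta>" "\<delta> \<le> - A * y" "0 < A" "0 < y" "levy_drift M L = 0"
    and "\<not> (AE \<omega> in M. L 1 \<omega> = 0)" "p < 0"
  shows "liq_time M L F A y < \<top>"
proof -
  obtain a where "0 < a" "\<And>u. 0 < u \<Longrightarrow> u < y \<Longrightarrow> a * u ^ 2 \<le> levy_kappaA M L A u / A"
    using levy_kappaA_ge_quadratic[OF assms(1-3,5,6)] by auto
  then show ?thesis
    unfolding liq_time_def using assms(4,7)
    by (intro nn_integral_inverse_Ginv_finite[where e = 2]) auto
qed

lemma liq_time_eq_top_if_drift_zero:
  assumes "neg_exp_moment M (L 1) \<delta>" "\<delta> \<le> - A * y" "0 < A" "0 < y" "levy_drift M L = 0"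
    and "\<not> (AE \<omega> in M. L 1 \<omega> = 0)" "0 \<le> p"
  shows "liq_time M L F A y = \<top>"
proof -
  obtain a where a: "0 < a" "\<And>u. 0 < u \<Longrightarrow> u < y \<Longrightarrow> a * u\<^sup>2 \<le> levy_kappaA M L A u / A"
    using levy_kappaA_ge_quadratic[OF assms(1-3,5,6)] by auto
  obtain b C where b: "0 < b" "0 < C" "\<And>u. 0 < u \<Longrightarrow> u < b \<Longrightarrow> levy_kappaA M L A u / A \<le> C * u\<^sup>2"
    using levy_kappaA_le_quadratic[OF assms(1-3,5)] by auto
  have "0 < levy_kappaA M L A u / A \<and> levy_kappaA M L A u / A \<le> C * u\<^sup>2" if "0 < u" "u < min b y" for u
  proof -
    have "0 < a * u\<^sup>2"
      using a(1) that by simp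
    then show ?thesis
      using a(2)[of u] b(3)[of u] that by auto
  qed
  then show ?thesis
    unfolding liq_time_def using assms(4,7) b(1,2)
    by (intro nn_integral_inverse_Ginv_eq_top[where b = "min b y" and C = C]) auto
qed

end

text \<open>The hypothesis exp_moment is implied by y_lt.\<close>

theorem mainTheorem10:
  fixes M :: "'a measure" and L :: "real \<Rightarrow> 'a \<Rightarrow> real"
    and F :: "real \<Rightarrow> real" and A y :: real
  assumes levy: "levy_process M L"
    and nontrivial: "\<not> (\<forall>t\<ge>0. AE \<omega> in M. L t \<omega> = 0)"
    and second_moment: "integrable M (\<lambda>\<omega>. (L 1 \<omega>)\<^sup>2)"
    and exp_moment: "\<exists>\<delta><0. integrable M (\<lambda>\<omega>. exp (\<delta> * L 1 \<omega>))"
    and A_pos: "0 < A"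
    and F_nonneg: "\<forall>x\<ge>0. 0 \<le> F x"
    and F_cont: "continuous_on {0..} F"
    and F_C1: "(\<forall>x>0. F differentiable (at x)) \<and> continuous_on {0<..} (deriv F)"
    and F_zero: "F 0 = 0"
    and F_conv: "strictly_convex_on {0..} (\<lambda>x. x * F x)"
    and F_mono: "strict_mono_on {0<..} (\<lambda>x. x\<^sup>2 * deriv F x)"
    and F_lim: "filterlim (\<lambda>x. x\<^sup>2 * deriv F x) at_top at_top"
    and y_pos: "0 < y"
    and y_lt: "ereal y < delta_bar_A M L A"
  shows "(levy_drift M L < 0 \<longrightarrow>
            (\<forall>p K. p < 1 \<and> 0 < K \<and> ((\<lambda>x. x powr p * deriv F x) \<longlongrightarrow> K) (at_right 0) \<longrightarrow>
               liq_time M L F A y < \<top>))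
       \<and> (levy_drift M L = 0 \<longrightarrow>
            (\<forall>p K. p < 1 \<and> 0 < K \<and> ((\<lambda>x. x powr p * deriv F x) \<longlongrightarrow> K) (at_right 0) \<longrightarrow>
               (0 \<le> p \<longrightarrow> liq_time M L F A y = \<top>) \<and> (p < 0 \<longrightarrow> liq_time M L F A y < \<top>)))"
proof -
  interpret prob_space M
    using levy_process_prob_space[OF levy] .
  obtain \<delta> where \<delta>: "\<delta> < 0" "\<delta> < - A * y" "integrable M (\<lambda>\<omega>. exp (\<delta> * L 1 \<omega>))"
    using exp_moment_below_delta_bar_A[OF A_pos y_lt] .
  have moment: "neg_exp_moment M (L 1) \<delta>"
    using prob_space_axioms levy_process_measurable[OF levy] second_moment \<delta>
    by (intro neg_exp_moment.intro neg_exp_moment_axioms.intro) auto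
  have \<delta>_le: "\<delta> \<le> - A * y"
    using \<delta>(2) by simp
  have L1_nonzero: "\<not> (AE \<omega> in M. L 1 \<omega> = 0)"
    using levy_process_AE_zero_if_AE_zero_1[OF levy] nontrivial by blast
  have impact: "impact_power_law F p K"
    if "p < 1 \<and> 0 < K \<and> ((\<lambda>x. x powr p * deriv F x) \<longlongrightarrow> K) (at_right 0)" for p K
    using F_C1 F_mono F_lim that by unfold_locales auto
  show ?thesis
    using impact_power_law.liq_time_finite_if_drift_neg[where L = L, OF _ moment \<delta>_le A_pos y_pos]
      impact_power_law.liq_time_finite_if_drift_zero[where L = L, OF _ moment \<delta>_le A_pos y_pos _ L1_nonzero]
      impact_power_law.liq_time_eq_top_if_drift_zero[where L = L, OF _ moment \<delta>_le A_pos y_pos _ L1_nonzero] impact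
    by blast
qed

end
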